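(* Let $l\geq 2$ be an integer and set $Q(\lambda,R):=P_l(\lambda,R-\lambda)$. Then $Q$ is a polynomial that contains the monomials $\lambda^l$ and $R$ with non-zero coefficients and contains no monomials $\lambda^k$ with $k\neq l$.
   Context: For $l\in\mathbb N$ and $\mu\in\mathbb C$, $H_l$ is the tridiagonal $l\times l$ matrix with entries $H_{l;jj}=(1-j)(l-j+1)$, $H_{l;j,j+1}=\mu j$, $H_{l;j,j-1}=\mu(l-j+1)$, and $H_{l;ij}=0$ if $|i-j|\geq 2$; $\det(H_l+\lambda\,\mathrm{Id})$ is a polynomial of degree $l$ in $(\lambda,\mu^2)$, written $P_l(\lambda,\mu^2)$. Thus $Q(\lambda,R)$ is $\det(H_l+\lambda\,\mathrm{Id})$ after the substitution $\mu^2=R-\lambda$. *)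

theory Defs
  imports "Jordan_Normal_Form.Determinant" "HOL-Computational_Algebra.Polynomial"
begin

text \<open>The tridiagonal l x l matrix H_l (paper indices j = 1..l correspond to
  0-based indices i = j - 1).\<close>
definition H_mat :: "nat \<Rightarrow> complex \<Rightarrow> complex mat" where
  "H_mat l \<mu> = mat l l (\<lambda>(i, k).
     let j = i + 1 in
     if k = i then (1 - of_nat j) * (of_nat l - of_nat j + 1)
     else if k = i + 1 then \<mu> * of_nat j
     else if k + 1 = i then \<mu> * (of_nat l - of_nat j + 1)
     else 0)"

text \<open>Bivariate polynomials in (lambda, R): a polynomial in lambda whose
  coefficients are polynomials in R.\<close>
definition eval2 :: "complex poly poly \<Rightarrow> complex \<Rightarrow> complex \<Rightarrow> complex" where
  "eval2 Q x r = poly (map_poly (\<lambda>c. poly c r) Q) x"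

definition coeff2 :: "complex poly poly \<Rightarrow> nat \<Rightarrow> nat \<Rightarrow> complex" where
  "coeff2 Q i j = coeff (coeff Q i) j"

end

theory Submission
  imports Defs
begin

text \<open>The shifted matrix \<open>H\<^sub>l + \<lambda> I\<close> is tridiagonal, so its leading principal minors obey the
  continuant recurrence \<open>D\<^sub>k\<^sub>+\<^sub>2 = (\<lambda> - c\<^sub>k) D\<^sub>k\<^sub>+\<^sub>1 - \<mu>\<^sup>2 c\<^sub>k D\<^sub>k\<close> with
  \<open>c\<^sub>k = (k + 1)(l - k - 1)\<close>. After the substitution \<open>\<mu>\<^sup>2 = R - \<lambda>\<close> this is a recurrence of
  bivariate polynomials. At \<open>R = 0\<close> it becomes \<open>D\<^sub>k\<^sub>+\<^sub>2 = (\<lambda> - c\<^sub>k) D\<^sub>k\<^sub>+\<^sub>1 + c\<^sub>k \<lambda> D\<^sub>k\<close>, which is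
  solved by \<open>D\<^sub>k = \<lambda>\<^sup>k\<close>; so \<open>Q(\<lambda>, 0) = \<lambda>\<^sup>l\<close>. At \<open>\<lambda> = 0\<close>, the coefficient of \<open>R\<close> picks up a
  factor \<open>-c\<^sub>k\<close> in every step, and all these factors are non-zero for \<open>k \<le> l - 2\<close>.\<close>

lemma det_tridiagonal_Suc_Suc:
  fixes g :: "nat \<Rightarrow> nat \<Rightarrow> 'a::comm_ring_1"
  assumes above: "\<And>i j. i + 1 < j \<Longrightarrow> g i j = 0"
      and below: "\<And>i j. j + 1 < i \<Longrightarrow> g i j = 0"
  shows "det (mat (Suc (Suc k)) (Suc (Suc k)) (\<lambda>(i, j). g i j)) =
    g (Suc k) (Suc k) * det (mat (Suc k) (Suc k) (\<lambda>(i, j). g i j))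
    - g (Suc k) k * g k (Suc k) * det (mat k k (\<lambda>(i, j). g i j))"
proof -
  define A where "A = mat (Suc (Suc k)) (Suc (Suc k)) (\<lambda>(i, j). g i j)"
  define B where "B = mat_delete A (Suc k) k"
  have A: "A \<in> carrier_mat (Suc (Suc k)) (Suc (Suc k))" by (simp add: A_def)
  have B: "B \<in> carrier_mat (Suc k) (Suc k)" by (simp add: B_def A_def mat_delete_def)
  have "det A = (\<Sum>j<Suc (Suc k). A $$ (Suc k, j) * cofactor A (Suc k) j)"
    by (rule laplace_expansion_row[OF A]) simp
  moreover have "(\<Sum>j<k. A $$ (Suc k, j) * cofactor A (Suc k) j) = 0"
    by (rule sum.neutral) (auto simp: A_def below)
  ultimately have det_A: "det A = A $$ (Suc k, k) * cofactor A (Suc k) k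
      + A $$ (Suc k, Suc k) * cofactor A (Suc k) (Suc k)"
    by simp
  have "det B = (\<Sum>i<Suc k. B $$ (i, k) * cofactor B i k)"
    by (rule laplace_expansion_column[OF B]) simp
  moreover have "(\<Sum>i<k. B $$ (i, k) * cofactor B i k) = 0"
    by (rule sum.neutral) (auto simp: B_def A_def mat_delete_def above)
  ultimately have det_B: "det B = B $$ (k, k) * cofactor B k k"
    by simp
  have minor_A: "mat_delete A (Suc k) (Suc k) = mat (Suc k) (Suc k) (\<lambda>(i, j). g i j)"
    by (rule eq_matI) (auto simp: A_def mat_delete_def)
  have minor_B: "mat_delete B k k = mat k k (\<lambda>(i, j). g i j)"
    by (rule eq_matI) (auto simp: B_def A_def mat_delete_def)
  have B_kk: "B $$ (k, k) = g k (Suc k)"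
    by (simp add: B_def A_def mat_delete_def)
  have signs: "(-1::'a) ^ (Suc k + k) = - 1" "(-1::'a) ^ (k + k) = 1"
      "(-1::'a) ^ (Suc k + Suc k) = 1"
    by (simp_all add: power_add)
  show ?thesis
    using det_A det_B
    unfolding cofactor_def minor_A minor_B B_kk signs B_def[symmetric] A_def[symmetric]
    by (simp add: A_def algebra_simps)
qed

lemma eval2_conv_poly: "eval2 Q x r = poly (poly Q [:x:]) r"
  unfolding eval2_def by (induction Q) (simp_all add: map_poly_pCons)

text \<open>The entries of \<open>H\<^sub>l + x I\<close>, as a function on all of \<open>nat \<times> nat\<close>, so that the leading
  principal minors of every size are available.\<close>
definition shifted_H_entry :: "nat \<Rightarrow> complex \<Rightarrow> complex \<Rightarrow> nat \<Rightarrow> nat \<Rightarrow> complex" where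
  "shifted_H_entry l \<mu> x i k = (let j = i + 1 in
     if k = i then (1 - of_nat j) * (of_nat l - of_nat j + 1)
     else if k = i + 1 then \<mu> * of_nat j
     else if k + 1 = i then \<mu> * (of_nat l - of_nat j + 1)
     else 0) + (if i = k then x else 0)"

lemma H_mat_plus_smult_one:
  "H_mat l \<mu> + x \<cdot>\<^sub>m 1\<^sub>m l = mat l l (\<lambda>(i, k). shifted_H_entry l \<mu> x i k)"
  by (rule eq_matI) (auto simp: H_mat_def shifted_H_entry_def Let_def)

text \<open>\<open>- c\<^sub>k\<close> is the diagonal entry of \<open>H\<^sub>l\<close> in (0-based) row \<open>k + 1\<close>, and \<open>\<mu>\<^sup>2 c\<^sub>k\<close> the product
  of the two off-diagonal entries linking rows \<open>k\<close> and \<open>k + 1\<close>.\<close>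
definition continuant_coeff :: "nat \<Rightarrow> nat \<Rightarrow> complex" where
  "continuant_coeff l k = of_nat (k + 1) * (of_nat l - of_nat (k + 2) + 1)"

text \<open>The leading principal minors \<open>D\<^sub>k(\<lambda>, R)\<close>, polynomials in \<open>\<lambda>\<close> over polynomials in \<open>R\<close>;
  the factor \<open>[:[:0, c:], [:- c:]:]\<close> is \<open>c (R - \<lambda>) = c \<mu>\<^sup>2\<close>.\<close>
fun minor_poly :: "nat \<Rightarrow> nat \<Rightarrow> complex poly poly" where
  "minor_poly l 0 = 1"
| "minor_poly l (Suc 0) = [:0, 1:]"
| "minor_poly l (Suc (Suc k)) =
     [:[:- continuant_coeff l k:], 1:] * minor_poly l (Suc k)
     - [:[:0, continuant_coeff l k:], [:- continuant_coeff l k:]:] * minor_poly l k"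

lemma det_leading_minor_eq_eval2:
  "det (mat k k (\<lambda>(i, j). shifted_H_entry l \<mu> x i j)) = eval2 (minor_poly l k) x (\<mu>\<^sup>2 + x)"
proof (induction l k rule: minor_poly.induct)
  case (1 l)
  then show ?case by (simp add: eval2_conv_poly)
next
  case (2 l)
  then show ?case by (subst det_single) (auto simp: eval2_conv_poly shifted_H_entry_def)
next
  case (3 l k)
  let ?g = "shifted_H_entry l \<mu> x"
  have "det (mat (Suc (Suc k)) (Suc (Suc k)) (\<lambda>(i, j). ?g i j)) =
      ?g (Suc k) (Suc k) * det (mat (Suc k) (Suc k) (\<lambda>(i, j). ?g i j))
      - ?g (Suc k) k * ?g k (Suc k) * det (mat k k (\<lambda>(i, j). ?g i j))"
    by (rule det_tridiagonal_Suc_Suc) (auto simp: shifted_H_entry_def Let_def)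
  also have "\<dots> = eval2 (minor_poly l (Suc (Suc k))) x (\<mu>\<^sup>2 + x)"
    unfolding 3
    by (simp add: eval2_conv_poly shifted_H_entry_def Let_def continuant_coeff_def
        algebra_simps power2_eq_square)
  finally show ?case .
qed

lemma eval2_minor_poly_R0: "eval2 (minor_poly l k) x 0 = x ^ k"
  by (induction l k rule: minor_poly.induct) (simp_all add: eval2_conv_poly algebra_simps)

lemma coeff2_minor_poly_R0: "coeff2 (minor_poly l k) i 0 = (if i = k then 1 else 0)"
proof -
  have "map_poly (\<lambda>c. poly c 0) (minor_poly l k) = monom 1 k"
    by (rule poly_eq_poly_eq_iff[THEN iffD1], rule ext)
      (simp add: eval2_minor_poly_R0[unfolded eval2_def] poly_monom)
  then have "coeff2 (minor_poly l k) i 0 = coeff (monom 1 k) i"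
    by (metis coeff2_def coeff_map_poly poly_0_coeff_0 poly_0)
  then show ?thesis by (simp add: coeff_monom)
qed

lemma coeff_minor_poly_Suc_Suc_lambda0:
  "coeff (minor_poly l (Suc (Suc k))) 0 =
     - smult (continuant_coeff l k) (coeff (minor_poly l (Suc k)) 0)
     - pCons 0 (smult (continuant_coeff l k) (coeff (minor_poly l k) 0))"
  by (simp add: coeff_mult_0 algebra_simps)

lemma coeff2_minor_poly_lambda0_R1:
  "coeff2 (minor_poly l (Suc (Suc k))) 0 1 = (\<Prod>i\<le>k. - continuant_coeff l i)"
proof (induction k)
  case 0
  then show ?case by (simp add: coeff2_def coeff_mult_0)
next
  case (Suc k)
  have "coeff2 (minor_poly l (Suc (Suc (Suc k)))) 0 1
      = - continuant_coeff l (Suc k) * coeff2 (minor_poly l (Suc (Suc k))) 0 1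
        - continuant_coeff l (Suc k) * coeff2 (minor_poly l (Suc k)) 0 0"
    unfolding coeff2_def coeff_minor_poly_Suc_Suc_lambda0 by (simp del: minor_poly.simps)
  also note Suc.IH
  also have "coeff2 (minor_poly l (Suc k)) 0 0 = 0"
    by (simp only: coeff2_minor_poly_R0) simp
  finally show ?case
    by (simp add: mult.commute del: minor_poly.simps)
qed

lemma continuant_coeff_nonzero: "k + 2 \<le> l \<Longrightarrow> continuant_coeff l k \<noteq> 0"
proof -
  assume "k + 2 \<le> l"
  then obtain d where "l = k + 2 + d" using le_Suc_ex by blast
  then have "continuant_coeff l k = of_nat ((k + 1) * (d + 1))"
    unfolding continuant_coeff_def by (simp add: algebra_simps)
  then show ?thesis by (simp only: of_nat_eq_0_iff) simp
qed

theorem proposition2p1: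
  fixes l :: nat
  assumes "l \<ge> 2"
  shows "\<exists>Q :: complex poly poly.
           (\<forall>x m :: complex. det (H_mat l m + x \<cdot>\<^sub>m 1\<^sub>m l) = eval2 Q x (m\<^sup>2 + x))
         \<and> coeff2 Q l 0 \<noteq> 0
         \<and> coeff2 Q 0 1 \<noteq> 0
         \<and> (\<forall>k. k \<noteq> l \<longrightarrow> coeff2 Q k 0 = 0)"
proof (intro exI[of _ "minor_poly l l"] conjI allI impI)
  show "det (H_mat l m + x \<cdot>\<^sub>m 1\<^sub>m l) = eval2 (minor_poly l l) x (m\<^sup>2 + x)" for x m
    unfolding H_mat_plus_smult_one det_leading_minor_eq_eval2 ..
  show "coeff2 (minor_poly l l) l 0 \<noteq> 0"
    by (simp add: coeff2_minor_poly_R0)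
  show "coeff2 (minor_poly l l) k 0 = 0" if "k \<noteq> l" for k
    using that by (simp add: coeff2_minor_poly_R0)
  obtain k where l: "l = Suc (Suc k)"
    using assms by (metis add_2_eq_Suc le_Suc_ex)
  have "continuant_coeff l i \<noteq> 0" if "i \<le> k" for i
    using that l by (intro continuant_coeff_nonzero) simp
  then show "coeff2 (minor_poly l l) 0 1 \<noteq> 0"
    by (subst (2) l, subst coeff2_minor_poly_lambda0_R1) simp
qed

end
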